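(* Assume Hypothesis 1 (stated in the context). Then: 1. $X_{\max}=T_{C_{\max}}\rtimes X_{\mathbf 0}$; 2. $C_{\max}$ is $(X_{\max},2)$-neighbour-transitive and $\delta_{\max}\ge5$; 3. the kernel $K$ of the action of $X$ on $M$ equals the kernel of the action of $X_{\max}$ on $M$, namely $K=X\cap B=X_{\max}\cap B=T_{C_{\max}}$; 4. $C_{\max}$ is an $\mathbb F_2X_{\mathbf 0}$-module; 5. $|C|/|C_{\max}|=|X|/|X_{\max}|=|X^M|/|X_{\mathbf 0}^M|$.
   Context: $H(m,2)$: vertex set $\mathbb F_2^m$, coordinates indexed by a set $M$, $|M|=m$, adjacency when differing in exactly one coordinate; $d$ Hamming distance. For a code $C$: minimum distance $\delta$, covering radius $\rho=\max_\alpha d(\alpha,C)$, $C_i=\{\alpha:d(\alpha,C)=i\}$. $\mathrm{Aut}(H(m,2))=B\rtimes L$, $B\cong\mathbb Z_2^m$ the translations $t_\beta:\alpha\mapsto\alpha+\beta$, $L\cong\mathrm{Sym}(M)$ coordinate permutations; $\mathrm{Aut}(C)$ is the setwise stabiliser of $C$. For $X\le B\rtimes L$, $X^M$ is the permutation group induced on $M$ (image in $L$), $X_{\mathbf 0}$ the stabiliser of $\mathbf 0$. $C$ is $(X,s)$-neighbour-transitive if $X\le\mathrm{Aut}(C)$ is transitive on each of $C,C_1,\dots,C_s$; completely transitive if $\mathrm{Aut}(C)$ is transitive on each of $C,C_1,\dots,C_\rho$. For a linear code $D$, $T_D=\{t_\beta:\beta\in D\}$. For a code $C\ni\mathbf 0$,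 the maximal linear subcode $C_{\max}$ is the largest linear subcode $D\subseteq C$ with $T_D\le\mathrm{Aut}(C)$. Hypothesis 1: $C$ is a completely transitive code in $H(m,2)$ with $\mathbf 0\in C$ and minimum distance $\delta\ge5$; $X=\mathrm{Aut}(C)$; $C_{\max}$ is the maximal linear subcode of $C$ with minimum distance $\delta_{\max}$; $X_{\max}$ is the setwise stabiliser of $C_{\max}$ in $X$; and $2\le\dim C_{\max}\le m-2$. *)

theory Defs
  imports Complex_Main "HOL-Algebra.Coset"
begin

text \<open>Vertices of H(m,2): subsets of the coordinate set M = UNIV :: 'm set
  (a subset is identified with its characteristic vector in F_2^M);
  vector addition is symmetric difference, the zero vector is the empty set.\<close>

definition symdiff :: "'a set \<Rightarrow> 'a set \<Rightarrow> 'a set" where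
  "symdiff a b = (a - b) \<union> (b - a)"

definition hamming :: "'m set \<Rightarrow> 'm set \<Rightarrow> nat" where
  "hamming a b = card (symdiff a b)"

definition translation :: "'m set \<Rightarrow> 'm set \<Rightarrow> 'm set" where
  "translation \<beta> = (\<lambda>\<alpha>. symdiff \<alpha> \<beta>)"

definition coordperm :: "('m \<Rightarrow> 'm) \<Rightarrow> 'm set \<Rightarrow> 'm set" where
  "coordperm \<sigma> = (\<lambda>\<alpha>. \<sigma> ` \<alpha>)"

text \<open>Aut(H(m,2)) = B \<rtimes> L, as a set of maps on vertices, and as a group.\<close>
definition HAut :: "('m set \<Rightarrow> 'm set) set" where
  "HAut = {translation \<beta> \<circ> coordperm \<sigma> | \<beta> \<sigma>. bij \<sigma>}"

definition HAutG :: "('m set \<Rightarrow> 'm set) monoid" where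
  "HAutG = \<lparr>carrier = HAut, monoid.mult = (\<circ>), monoid.one = id\<rparr>"

definition Btrans :: "('m set \<Rightarrow> 'm set) set" where
  "Btrans = range translation"

definition perm_of :: "('m set \<Rightarrow> 'm set) \<Rightarrow> ('m \<Rightarrow> 'm)" where
  "perm_of g = (SOME \<sigma>. bij \<sigma> \<and> g = translation (g {}) \<circ> coordperm \<sigma>)"

definition induced_perm :: "('m set \<Rightarrow> 'm set) set \<Rightarrow> ('m \<Rightarrow> 'm) set" where
  "induced_perm X = perm_of ` X"

definition kernel_on_coords :: "('m set \<Rightarrow> 'm set) set \<Rightarrow> ('m set \<Rightarrow> 'm set) set" where
  "kernel_on_coords X = {g \<in> X. perm_of g = id}"

definition stab0 :: "('m set \<Rightarrow> 'm set) set \<Rightarrow> ('m set \<Rightarrow> 'm set) set" where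
  "stab0 X = {g \<in> X. g {} = {}}"

definition setwise_stab :: "('m set \<Rightarrow> 'm set) set \<Rightarrow> 'm set set \<Rightarrow> ('m set \<Rightarrow> 'm set) set" where
  "setwise_stab X D = {g \<in> X. g ` D = D}"

definition AutC :: "'m set set \<Rightarrow> ('m set \<Rightarrow> 'm set) set" where
  "AutC C = setwise_stab HAut C"

definition min_dist :: "'m set set \<Rightarrow> nat" where
  "min_dist C = Min {hamming a b | a b. a \<in> C \<and> b \<in> C \<and> a \<noteq> b}"

definition dist_code :: "'m set \<Rightarrow> 'm set set \<Rightarrow> nat" where
  "dist_code \<alpha> C = Min {hamming \<alpha> c | c. c \<in> C}"

definition covering_radius :: "'m set set \<Rightarrow> nat" where
  "covering_radius C = Max {dist_code \<alpha> C | \<alpha>. True}"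

definition code_layer :: "'m set set \<Rightarrow> nat \<Rightarrow> 'm set set" where
  "code_layer C i = {\<alpha>. dist_code \<alpha> C = i}"

definition transitive_on :: "('m set \<Rightarrow> 'm set) set \<Rightarrow> 'm set set \<Rightarrow> bool" where
  "transitive_on X S \<longleftrightarrow> (\<forall>a\<in>S. \<forall>b\<in>S. \<exists>g\<in>X. g a = b)"

definition neighbour_transitive ::
  "('m set \<Rightarrow> 'm set) set \<Rightarrow> 'm set set \<Rightarrow> nat \<Rightarrow> bool" where
  "neighbour_transitive X C s \<longleftrightarrow>
     subgroup X HAutG \<and> X \<subseteq> AutC C \<and> transitive_on X C \<and>
     (\<forall>i\<in>{1..s}. transitive_on X (code_layer C i))"

definition completely_transitive :: "'m set set \<Rightarrow> bool" where
  "completely_transitive C \<longleftrightarrow>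
     (\<forall>i\<le>covering_radius C. transitive_on (AutC C) (code_layer C i))"

definition linear_code :: "'m set set \<Rightarrow> bool" where
  "linear_code D \<longleftrightarrow> {} \<in> D \<and> (\<forall>a\<in>D. \<forall>b\<in>D. symdiff a b \<in> D)"

definition code_dim :: "'m set set \<Rightarrow> nat" where
  "code_dim D = (THE k. card D = 2 ^ k)"

definition transl_group :: "'m set set \<Rightarrow> ('m set \<Rightarrow> 'm set) set" where
  "transl_group D = translation ` D"

definition is_max_linear_subcode :: "'m set set \<Rightarrow> 'm set set \<Rightarrow> bool" where
  "is_max_linear_subcode C D \<longleftrightarrow>
     linear_code D \<and> D \<subseteq> C \<and> transl_group D \<subseteq> AutC C \<and>
     (\<forall>D'. linear_code D' \<and> D' \<subseteq> C \<and> transl_group D' \<subseteq> AutC C \<longrightarrow> D' \<subseteq> D)"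

definition internal_semidirect ::
  "('m set \<Rightarrow> 'm set) set \<Rightarrow> ('m set \<Rightarrow> 'm set) set \<Rightarrow> ('m set \<Rightarrow> 'm set) set \<Rightarrow> bool" where
  "internal_semidirect G N H \<longleftrightarrow>
     subgroup G HAutG \<and> normal N (HAutG\<lparr>carrier := G\<rparr>) \<and>
     subgroup H (HAutG\<lparr>carrier := G\<rparr>) \<and> N \<inter> H = {id} \<and>
     G = {n \<circ> h | n h. n \<in> N \<and> h \<in> H}"

definition F2_module :: "'m set set \<Rightarrow> ('m set \<Rightarrow> 'm set) set \<Rightarrow> bool" where
  "F2_module D Y \<longleftrightarrow> linear_code D \<and>
     (\<forall>g\<in>Y. g ` D = D \<and> (\<forall>a\<in>D. \<forall>b\<in>D. g (symdiff a b) = symdiff (g a) (g b)))"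

end

theory Submission
  imports Defs
begin

text \<open>
  Write X = Aut(C). The translation vectors of X form a linear subcode of C whose translations
  lie in X, so by maximality X \<inter> B = T_Cmax. An element g of X_0 conjugates t_b to the translation
  by the coordinate image of b, which is again in X \<inter> B; hence X_0 stabilises Cmax, and
  X_max = T_Cmax X_0 with T_Cmax normal and X_0 acting linearly on Cmax.
  Since \<delta> \<ge> 5, a vector of weight i \<le> 2 lies in C_i with 0 as its unique nearest codeword,
  so an automorphism of C carrying one such vector to another must fix 0: X_0 is transitive on
  the vectors of each weight i \<le> 2. Translating by nearest codewords of Cmax then gives
  2-neighbour transitivity of Cmax. The index formulas are orbit-stabiliser counts:
  |X| = |C| |X_0|, |X_max| = |Cmax| |X_0|, |X| = |X^M| |T_Cmax|, and X_0 acts faithfully on M.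
\<close>

unbundle no m_inv_syntax

section \<open>Translations and coordinate permutations\<close>

lemma symdiff_iff: "x \<in> symdiff a b \<longleftrightarrow> (x \<in> a) \<noteq> (x \<in> b)"
  by (auto simp: symdiff_def)

lemma symdiff_assoc: "symdiff (symdiff a b) c = symdiff a (symdiff b c)"
  by (auto simp: symdiff_iff)

lemma symdiff_self [simp]: "symdiff a a = {}"
  by (auto simp: symdiff_iff)

lemma symdiff_empty [simp]: "symdiff a {} = a" "symdiff {} a = a"
  by (auto simp: symdiff_iff)

lemma symdiff_eq_empty_iff: "symdiff a b = {} \<longleftrightarrow> a = b"
  by (auto simp: symdiff_iff set_eq_iff)

lemma image_symdiff: "inj f \<Longrightarrow> f ` symdiff a b = symdiff (f ` a) (f ` b)"
  by (simp add: symdiff_def image_Un image_set_diff)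

lemma translation_apply: "translation b x = symdiff x b"
  by (simp add: translation_def)

lemma coordperm_apply: "coordperm \<sigma> x = \<sigma> ` x"
  by (simp add: coordperm_def)

lemma translation_comp: "translation a \<circ> translation b = translation (symdiff a b)"
  by (auto simp: fun_eq_iff translation_apply symdiff_iff)

lemma translation_empty [simp]: "translation {} = id"
  by (simp add: translation_def fun_eq_iff)

lemma translation_comp_self [simp]: "translation a \<circ> translation a = id"
  by (simp add: translation_comp)

lemma inv_translation [simp]: "inv (translation b) = translation b"
  by (rule inv_unique_comp) simp_all

lemma inj_translation: "inj translation"
  by (rule injI) (metis symdiff_empty(2) translation_apply)

lemma coordperm_comp: "coordperm \<sigma> \<circ> coordperm \<tau> = coordperm (\<sigma> \<circ> \<tau>)"
  by (auto simp: fun_eq_iff coordperm_apply image_comp)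

lemma coordperm_id [simp]: "coordperm id = id"
  by (simp add: fun_eq_iff coordperm_apply)

lemma inj_coordperm: "inj coordperm"
proof (rule injI)
  fix \<sigma> \<tau> :: "'a \<Rightarrow> 'a"
  assume "coordperm \<sigma> = coordperm \<tau>"
  then have "\<sigma> ` {x} = \<tau> ` {x}" for x
    by (metis coordperm_apply)
  then show "\<sigma> = \<tau>"
    by auto
qed

lemma coordperm_comp_translation:
  "inj \<sigma> \<Longrightarrow> coordperm \<sigma> \<circ> translation b = translation (\<sigma> ` b) \<circ> coordperm \<sigma>"
  by (simp add: fun_eq_iff coordperm_apply translation_apply image_symdiff)

lemma HAutI: "bij \<sigma> \<Longrightarrow> translation b \<circ> coordperm \<sigma> \<in> HAut"
  unfolding HAut_def by blast

lemma HAutE: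
  assumes "g \<in> HAut"
  obtains b \<sigma> where "bij \<sigma>" "g = translation b \<circ> coordperm \<sigma>"
  using assms unfolding HAut_def by blast

lemma translation_in_HAut [simp]: "translation b \<in> HAut"
  using HAutI[of id b] by simp

lemma id_in_HAut [simp]: "id \<in> HAut"
  using translation_in_HAut[of "{}"] by simp

lemma perm_of_eq:
  assumes "bij \<sigma>" and g: "g = translation b \<circ> coordperm \<sigma>"
  shows "perm_of g = \<sigma>"
proof -
  have g_zero: "g {} = b"
    using g by (simp add: translation_apply coordperm_apply)
  have "\<tau> = \<sigma>" if "g = translation b \<circ> coordperm \<tau>" for \<tau>
  proof -
    have "coordperm \<tau> = translation b \<circ> g"
      using that by (simp flip: comp_assoc)
    also have "\<dots> = coordperm \<sigma>"
      using g by (simp flip: comp_assoc)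
    finally show ?thesis
      by (rule injD[OF inj_coordperm])
  qed
  then show ?thesis
    unfolding perm_of_def g_zero using assms by (intro some_equality) auto
qed

lemma HAut_decomp:
  assumes "g \<in> HAut"
  shows "bij (perm_of g)" and "g = translation (g {}) \<circ> coordperm (perm_of g)"
proof -
  obtain b \<sigma> where \<sigma>: "bij \<sigma>" and g: "g = translation b \<circ> coordperm \<sigma>"
    using assms by (rule HAutE)
  then have "perm_of g = \<sigma>" and "g {} = b"
    by (simp_all add: perm_of_eq translation_apply coordperm_apply)
  with \<sigma> g show "bij (perm_of g)" and "g = translation (g {}) \<circ> coordperm (perm_of g)"
    by simp_all
qed

lemma HAut_fixing_zero: "g \<in> HAut \<Longrightarrow> g {} = {} \<Longrightarrow> g = coordperm (perm_of g)"
  using HAut_decomp(2)[of g] by simp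

lemma perm_of_translation [simp]: "perm_of (translation b) = id"
  by (rule perm_of_eq[of id]) auto

lemma perm_of_id [simp]: "perm_of id = id"
  using perm_of_translation[of "{}"] by simp

lemma Btrans_iff_perm_of: "g \<in> HAut \<Longrightarrow> g \<in> Btrans \<longleftrightarrow> perm_of g = id"
  using HAut_decomp[of g] by (auto simp: Btrans_def)

lemma HAut_comp:
  assumes "g \<in> HAut" "h \<in> HAut"
  shows "g \<circ> h \<in> HAut" and "perm_of (g \<circ> h) = perm_of g \<circ> perm_of h"
proof -
  obtain a \<sigma> where \<sigma>: "bij \<sigma>" and g: "g = translation a \<circ> coordperm \<sigma>"
    using assms(1) by (rule HAutE)
  obtain b \<tau> where \<tau>: "bij \<tau>" and h: "h = translation b \<circ> coordperm \<tau>"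
    using assms(2) by (rule HAutE)
  have "g \<circ> h = translation a \<circ> (coordperm \<sigma> \<circ> translation b) \<circ> coordperm \<tau>"
    using g h by (simp add: comp_assoc)
  also have "\<dots> = translation a \<circ> translation (\<sigma> ` b) \<circ> (coordperm \<sigma> \<circ> coordperm \<tau>)"
    using \<sigma> by (simp add: bij_is_inj coordperm_comp_translation comp_assoc)
  finally have gh: "g \<circ> h = translation (symdiff a (\<sigma> ` b)) \<circ> coordperm (\<sigma> \<circ> \<tau>)"
    by (simp add: translation_comp coordperm_comp)
  have \<sigma>\<tau>: "bij (\<sigma> \<circ> \<tau>)"
    using \<sigma> \<tau> by (rule bij_comp[rotated])
  show "g \<circ> h \<in> HAut"
    unfolding gh using \<sigma>\<tau> by (rule HAutI)
  show "perm_of (g \<circ> h) = perm_of g \<circ> perm_of h"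
    using perm_of_eq[OF \<sigma>\<tau> gh] perm_of_eq[OF \<sigma> g] perm_of_eq[OF \<tau> h] by simp
qed

lemma HAut_inv:
  assumes "g \<in> HAut"
  shows "inv g \<in> HAut" and "bij g"
proof -
  obtain b \<sigma> where \<sigma>: "bij \<sigma>" and g: "g = translation b \<circ> coordperm \<sigma>"
    using assms by (rule HAutE)
  define h where "h = coordperm (inv \<sigma>) \<circ> translation b"
  have inv_\<sigma>: "bij (inv \<sigma>)" "inv \<sigma> \<circ> \<sigma> = id" "\<sigma> \<circ> inv \<sigma> = id"
    using \<sigma> bij_imp_bij_inv inv_o_cancel[OF bij_is_inj] surj_iff[THEN iffD1, OF bij_is_surj]
    by blast+
  have "h = translation (inv \<sigma> ` b) \<circ> coordperm (inv \<sigma>)"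
    unfolding h_def using inv_\<sigma>(1) by (simp add: bij_is_inj coordperm_comp_translation)
  then have "h \<in> HAut"
    using inv_\<sigma>(1) by (simp add: HAutI)
  moreover have "h \<circ> g = id" and "g \<circ> h = id"
    unfolding g h_def using inv_\<sigma>(2,3)
    by (simp_all add: fun_eq_iff translation_apply coordperm_apply symdiff_assoc image_comp)
  ultimately show "inv g \<in> HAut" and "bij g"
    by (simp_all add: inv_unique_comp o_bij)
qed

lemma HAut_apply: "g \<in> HAut \<Longrightarrow> g x = symdiff (perm_of g ` x) (g {})"
  using HAut_decomp(2)[of g] by (metis comp_apply coordperm_apply translation_apply)

lemma HAut_conj_translation:
  assumes "g \<in> HAut"
  shows "g \<circ> translation b \<circ> inv g = translation (perm_of g ` b)"
proof -
  define \<sigma> c where "\<sigma> = perm_of g" and "c = g {}"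
  have g: "g x = symdiff (\<sigma> ` x) c" for x
    unfolding \<sigma>_def c_def using assms by (rule HAut_apply)
  have "inj \<sigma>"
    unfolding \<sigma>_def using HAut_decomp(1)[OF assms] by (rule bij_is_inj)
  then have "g \<circ> translation b = translation (\<sigma> ` b) \<circ> g"
    by (simp add: fun_eq_iff translation_apply g image_symdiff) (auto simp: symdiff_iff)
  moreover have "g \<circ> inv g = id"
    using surj_iff[THEN iffD1, OF bij_is_surj[OF HAut_inv(2)[OF assms]]] .
  ultimately show ?thesis
    unfolding \<sigma>_def by (simp add: comp_assoc)
qed

lemma HAut_linear:
  assumes "g \<in> HAut" "g {} = {}"
  shows "g (symdiff a b) = symdiff (g a) (g b)"
proof -
  have "g x = perm_of g ` x" for x
    using HAut_apply[OF assms(1), of x] assms(2) by simp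
  then show ?thesis
    using image_symdiff[OF bij_is_inj[OF HAut_decomp(1)[OF assms(1)]]] by simp
qed

section \<open>Subgroups of the automorphism group\<close>

definition aut_subgroup :: "('m set \<Rightarrow> 'm set) set \<Rightarrow> bool" where
  "aut_subgroup K \<longleftrightarrow>
     K \<subseteq> HAut \<and> id \<in> K \<and> (\<forall>g\<in>K. \<forall>h\<in>K. g \<circ> h \<in> K) \<and> (\<forall>g\<in>K. inv g \<in> K)"

lemma aut_subgroupD:
  assumes "aut_subgroup K"
  shows "K \<subseteq> HAut" "id \<in> K" "g \<in> K \<Longrightarrow> h \<in> K \<Longrightarrow> g \<circ> h \<in> K" "g \<in> K \<Longrightarrow> inv g \<in> K"
  using assms by (auto simp: aut_subgroup_def)

lemma aut_subgroup_bij: "aut_subgroup K \<Longrightarrow> g \<in> K \<Longrightarrow> bij g"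
  using HAut_inv(2) by (auto simp: aut_subgroup_def)

lemma aut_subgroup_comp_inv: "aut_subgroup K \<Longrightarrow> g \<in> K \<Longrightarrow> g \<circ> inv g = id"
  using surj_iff[THEN iffD1, OF bij_is_surj[OF aut_subgroup_bij]] .

lemma aut_subgroup_HAut: "aut_subgroup HAut"
  unfolding aut_subgroup_def using HAut_comp(1) HAut_inv(1) by auto

lemma aut_subgroup_setwise_stab:
  assumes "aut_subgroup K"
  shows "aut_subgroup (setwise_stab K D)"
  unfolding aut_subgroup_def setwise_stab_def
proof (intro conjI ballI)
  fix g h assume g: "g \<in> {g \<in> K. g ` D = D}" and h: "h \<in> {g \<in> K. g ` D = D}"
  have "(g \<circ> h) ` D = g ` h ` D"
    by (simp only: image_comp)
  with g h show "g \<circ> h \<in> {g \<in> K. g ` D = D}"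
    using aut_subgroupD(3)[OF assms] by simp
  have "inv g ` D = inv g ` g ` D"
    using g by simp
  also have "\<dots> = D"
    by (rule image_inv_f_f, rule bij_is_inj, rule aut_subgroup_bij[OF assms]) (use g in simp)
  finally show "inv g \<in> {g \<in> K. g ` D = D}"
    using g aut_subgroupD(4)[OF assms] by simp
qed (use aut_subgroupD[OF assms] in auto)

lemma stab0_eq_setwise_stab: "stab0 K = setwise_stab K {{}}"
  by (auto simp: stab0_def setwise_stab_def)

lemma aut_subgroup_stab0: "aut_subgroup K \<Longrightarrow> aut_subgroup (stab0 K)"
  unfolding stab0_eq_setwise_stab by (rule aut_subgroup_setwise_stab)

lemma aut_subgroup_AutC: "aut_subgroup (AutC C)"
  unfolding AutC_def by (rule aut_subgroup_setwise_stab[OF aut_subgroup_HAut])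

lemma linear_code_translation_image:
  assumes "linear_code D" "b \<in> D"
  shows "translation b ` D = D"
proof
  show sub: "translation b ` D \<subseteq> D"
    using assms by (auto simp: linear_code_def translation_apply)
  show "D \<subseteq> translation b ` D"
  proof
    fix x assume "x \<in> D"
    then have "translation b x \<in> D" "translation b (translation b x) = x"
      using sub by (auto simp: translation_apply symdiff_assoc)
    then show "x \<in> translation b ` D"
      by (metis image_eqI)
  qed
qed

lemma aut_subgroup_transl_group:
  assumes "linear_code D"
  shows "aut_subgroup (transl_group D)"
  unfolding aut_subgroup_def transl_group_def
proof (intro conjI ballI)
  show "id \<in> translation ` D"
    using assms translation_empty unfolding linear_code_def by (metis image_eqI)
  show "g \<circ> h \<in> translation ` D" if "g \<in> translation ` D" "h \<in> translation ` D" for g h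
    using that assms unfolding linear_code_def by (auto simp: translation_comp)
qed auto

lemma HAutG_update_simps [simp]:
  "carrier (HAutG\<lparr>carrier := K\<rparr>) = K"
  "monoid.mult (HAutG\<lparr>carrier := K\<rparr>) = (\<circ>)"
  "one (HAutG\<lparr>carrier := K\<rparr>) = id"
  by (simp_all add: HAutG_def)

lemma HAutG_carrier_HAut: "HAutG\<lparr>carrier := HAut\<rparr> = HAutG"
  by (simp add: HAutG_def)

lemma group_aut_subgroup:
  assumes "aut_subgroup K"
  shows "group (HAutG\<lparr>carrier := K\<rparr>)"
proof (rule groupI)
  show "\<exists>h\<in>carrier (HAutG\<lparr>carrier := K\<rparr>). h \<otimes>\<^bsub>HAutG\<lparr>carrier := K\<rparr>\<^esub> g = \<one>\<^bsub>HAutG\<lparr>carrier := K\<rparr>\<^esub>"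
    if "g \<in> carrier (HAutG\<lparr>carrier := K\<rparr>)" for g
    using that aut_subgroupD(4)[OF assms] inv_o_cancel[OF bij_is_inj[OF aut_subgroup_bij[OF assms]]]
    by auto
qed (use aut_subgroupD[OF assms] in \<open>auto simp: comp_assoc\<close>)

lemma m_inv_aut_subgroup:
  assumes "aut_subgroup K" "g \<in> K"
  shows "m_inv (HAutG\<lparr>carrier := K\<rparr>) g = inv g"
proof -
  interpret group "HAutG\<lparr>carrier := K\<rparr>"
    using assms(1) by (rule group_aut_subgroup)
  show ?thesis
    using assms aut_subgroupD(4)[OF assms(1)] aut_subgroup_comp_inv[OF assms]
      inv_o_cancel[OF bij_is_inj[OF aut_subgroup_bij[OF assms]]]
    by (intro inv_equality) auto
qed

lemma subgroup_aut_subgroup: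
  assumes "aut_subgroup K" "aut_subgroup H" "H \<subseteq> K"
  shows "subgroup H (HAutG\<lparr>carrier := K\<rparr>)"
  using assms aut_subgroupD[OF assms(2)] m_inv_aut_subgroup[OF assms(1)]
  by unfold_locales auto

lemma subgroup_HAutG: "aut_subgroup H \<Longrightarrow> subgroup H HAutG"
  using subgroup_aut_subgroup[OF aut_subgroup_HAut] aut_subgroupD(1) HAutG_carrier_HAut
  by metis

lemma normal_aut_subgroup:
  assumes "aut_subgroup K" "aut_subgroup N" "N \<subseteq> K"
    and "\<And>g n. g \<in> K \<Longrightarrow> n \<in> N \<Longrightarrow> g \<circ> n \<circ> inv g \<in> N"
  shows "normal N (HAutG\<lparr>carrier := K\<rparr>)"
proof -
  interpret group "HAutG\<lparr>carrier := K\<rparr>"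
    using assms(1) by (rule group_aut_subgroup)
  show ?thesis
    unfolding normal_inv_iff using subgroup_aut_subgroup[OF assms(1-3)] assms(4)
    by (simp add: m_inv_aut_subgroup[OF assms(1)])
qed

section \<open>Orbit counting\<close>

text \<open>The fibres of \<open>\<phi>\<close> are the left cosets of \<open>K\<close>.\<close>

lemma card_aut_subgroup_fibres:
  assumes G: "aut_subgroup G" and "K \<subseteq> G"
    and invariant: "\<And>g k. g \<in> G \<Longrightarrow> k \<in> K \<Longrightarrow> \<phi> (g \<circ> k) = \<phi> g"
    and fibre: "\<And>g h. g \<in> G \<Longrightarrow> h \<in> G \<Longrightarrow> \<phi> g = \<phi> h \<Longrightarrow> inv g \<circ> h \<in> K"
  shows "card G = card (\<phi> ` G) * card K"
proof -
  define rep where "rep y = (SOME g. g \<in> G \<and> \<phi> g = y)" for y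
  have rep: "rep y \<in> G" "\<phi> (rep y) = y" if "y \<in> \<phi> ` G" for y
    using someI_ex[of "\<lambda>g. g \<in> G \<and> \<phi> g = y"] that unfolding rep_def by blast+
  have "bij_betw (\<lambda>(y, k). rep y \<circ> k) (\<phi> ` G \<times> K) G"
  proof (rule bij_betw_imageI)
    have pair_eq: "y = y' \<and> k = k'"
      if eq: "rep y \<circ> k = rep y' \<circ> k'" and y: "y \<in> \<phi> ` G" "y' \<in> \<phi> ` G" and k: "k \<in> K" "k' \<in> K"
      for y k y' k'
    proof
      have "y = \<phi> (rep y \<circ> k)"
        using invariant[OF rep(1)[OF y(1)] k(1)] rep(2)[OF y(1)] by simp
      also have "\<dots> = y'"
        using invariant[OF rep(1)[OF y(2)] k(2)] rep(2)[OF y(2)] eq by simp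
      finally show "y = y'" .
      have "rep y (k x) = rep y (k' x)" for x
        using fun_cong[OF eq, of x] \<open>y = y'\<close> by simp
      then show "k = k'"
        using bij_is_inj[OF aut_subgroup_bij[OF G rep(1)[OF y(1)]]] by (simp add: inj_eq fun_eq_iff)
    qed
    show "inj_on (\<lambda>(y, k). rep y \<circ> k) (\<phi> ` G \<times> K)"
    proof (rule inj_onI)
      fix p q
      assume "p \<in> \<phi> ` G \<times> K" "q \<in> \<phi> ` G \<times> K"
        and "(\<lambda>(y, k). rep y \<circ> k) p = (\<lambda>(y, k). rep y \<circ> k) q"
      then show "p = q"
        using pair_eq by (cases p, cases q) simp
    qed
    show "(\<lambda>(y, k). rep y \<circ> k) ` (\<phi> ` G \<times> K) = G"
    proof
      show "(\<lambda>(y, k). rep y \<circ> k) ` (\<phi> ` G \<times> K) \<subseteq> G"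
        using rep(1) aut_subgroupD(3)[OF G] \<open>K \<subseteq> G\<close> by auto
      show "G \<subseteq> (\<lambda>(y, k). rep y \<circ> k) ` (\<phi> ` G \<times> K)"
      proof
        fix g assume g: "g \<in> G"
        then have y: "\<phi> g \<in> \<phi> ` G" by simp
        have "inv (rep (\<phi> g)) \<circ> g \<in> K"
          using fibre[OF rep(1)[OF y] g] rep(2)[OF y] by simp
        moreover have "rep (\<phi> g) \<circ> (inv (rep (\<phi> g)) \<circ> g) = g"
          using aut_subgroup_comp_inv[OF G rep(1)[OF y]] by (simp flip: comp_assoc)
        ultimately show "g \<in> (\<lambda>(y, k). rep y \<circ> k) ` (\<phi> ` G \<times> K)"
          using y by (intro image_eqI[of _ _ "(\<phi> g, inv (rep (\<phi> g)) \<circ> g)"]) auto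
      qed
    qed
  qed
  then have "card (\<phi> ` G \<times> K) = card G"
    by (rule bij_betw_same_card)
  then show ?thesis
    by (simp add: card_cartesian_product)
qed

lemma card_orbit_stabiliser:
  assumes "aut_subgroup G"
  shows "card G = card ((\<lambda>g. g {}) ` G) * card (stab0 G)"
proof (rule card_aut_subgroup_fibres[OF assms])
  fix g h assume g: "g \<in> G" and h: "h \<in> G" and "g {} = h {}"
  then have "(inv g \<circ> h) {} = inv g (g {})"
    by simp
  also have "\<dots> = {}"
    using inv_f_f[OF bij_is_inj[OF aut_subgroup_bij[OF assms g]]] .
  finally have "(inv g \<circ> h) {} = {}" .
  then show "inv g \<circ> h \<in> stab0 G"
    using aut_subgroupD(3,4)[OF assms] g h by (simp add: stab0_def)
qed (auto simp: stab0_def)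

lemma orbit_of_zero:
  assumes "transitive_on G S" "{} \<in> S" "\<And>g. g \<in> G \<Longrightarrow> g ` S = S"
  shows "(\<lambda>g. g {}) ` G = S"
proof
  show "(\<lambda>g. g {}) ` G \<subseteq> S"
    using assms(2,3) by blast
  show "S \<subseteq> (\<lambda>g. g {}) ` G"
  proof
    fix x assume "x \<in> S"
    then obtain g where "g \<in> G" "g {} = x"
      using assms(1,2) unfolding transitive_on_def by blast
    then show "x \<in> (\<lambda>g. g {}) ` G"
      by blast
  qed
qed

lemma card_induced_perm_kernel:
  assumes "aut_subgroup G"
  shows "card G = card (induced_perm G) * card (G \<inter> Btrans)"
  unfolding induced_perm_def
proof (rule card_aut_subgroup_fibres[OF assms])
  have HAut: "g \<in> HAut" if "g \<in> G" for g
    using that aut_subgroupD(1)[OF assms] by blast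
  show "perm_of (g \<circ> k) = perm_of g" if "g \<in> G" "k \<in> G \<inter> Btrans" for g k
  proof -
    have "perm_of k = id"
      using that Btrans_iff_perm_of HAut by blast
    then show ?thesis
      using that HAut_comp(2)[OF HAut HAut] by simp
  qed
  fix g h assume g: "g \<in> G" and h: "h \<in> G" and "perm_of g = perm_of h"
  have "perm_of (inv g \<circ> h) = perm_of (inv g \<circ> g)"
    using HAut_comp(2)[OF HAut HAut] aut_subgroupD(4)[OF assms] g h \<open>perm_of g = perm_of h\<close>
    by simp
  also have "\<dots> = id"
    using inv_o_cancel[OF bij_is_inj[OF aut_subgroup_bij[OF assms g]]] by simp
  finally have "perm_of (inv g \<circ> h) = id" .
  moreover have "inv g \<circ> h \<in> G"
    using aut_subgroupD(3,4)[OF assms] g h by blast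
  ultimately show "inv g \<circ> h \<in> G \<inter> Btrans"
    by (simp add: Btrans_iff_perm_of[OF HAut])
qed auto

lemma card_induced_perm_stab0:
  assumes "G \<subseteq> HAut"
  shows "card (induced_perm (stab0 G)) = card (stab0 G)"
  unfolding induced_perm_def
proof (rule card_image, rule inj_onI)
  have fixing_zero: "g = coordperm (perm_of g)" if "g \<in> stab0 G" for g
    using that assms by (intro HAut_fixing_zero) (auto simp: stab0_def)
  fix g h assume "g \<in> stab0 G" "h \<in> stab0 G" "perm_of g = perm_of h"
  then show "g = h"
    using fixing_zero by metis
qed

lemma kernel_on_coords_eq: "K \<subseteq> HAut \<Longrightarrow> kernel_on_coords K = K \<inter> Btrans"
  using Btrans_iff_perm_of by (auto simp: kernel_on_coords_def)

section \<open>Distances and completely transitive codes\<close>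

lemma hamming_eq_0_iff: "hamming (a :: 'm::finite set) b = 0 \<longleftrightarrow> a = b"
  by (simp add: hamming_def symdiff_eq_empty_iff)

lemma hamming_empty [simp]: "hamming a {} = card a" "hamming {} a = card a"
  by (simp_all add: hamming_def)

lemma hamming_triangle: "hamming (a :: 'm::finite set) c \<le> hamming a b + hamming b c"
proof -
  have "card (symdiff a c) \<le> card (symdiff a b \<union> symdiff b c)"
    by (rule card_mono) (auto simp: symdiff_iff)
  also have "\<dots> \<le> card (symdiff a b) + card (symdiff b c)"
    by (rule card_Un_le)
  finally show ?thesis
    by (simp add: hamming_def)
qed

lemma hamming_HAut:
  assumes "g \<in> HAut"
  shows "hamming (g a) (g b) = hamming a b"
proof -
  have inj: "inj (perm_of g)"
    using HAut_decomp(1)[OF assms] by (rule bij_is_inj)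
  have "symdiff (g a) (g b) = symdiff (perm_of g ` a) (perm_of g ` b)"
    unfolding HAut_apply[OF assms, of a] HAut_apply[OF assms, of b] by (auto simp: symdiff_iff)
  also have "\<dots> = perm_of g ` symdiff a b"
    using inj by (simp add: image_symdiff)
  finally show ?thesis
    unfolding hamming_def using card_image[OF inj_on_subset[OF inj subset_UNIV]] by simp
qed

lemma finite_hamming_values: "finite {hamming a b | (a :: 'm::finite set) b. P a b}"
proof -
  have "{hamming a b | a b. P a b} = case_prod hamming ` {(a, b). P a b}"
    by auto
  then show ?thesis
    by simp
qed

lemma min_dist_le_hamming:
  assumes "a \<in> C" "b \<in> C" "a \<noteq> b"
  shows "min_dist C \<le> hamming (a :: 'm::finite set) b"
  unfolding min_dist_def using assms by (intro Min_le finite_hamming_values) auto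

lemma min_dist_subcode:
  fixes C D :: "'m::finite set set"
  assumes "D \<subseteq> C" "a \<in> D" "b \<in> D" "a \<noteq> b"
  shows "min_dist C \<le> min_dist D"
proof -
  have "min_dist D \<in> {hamming a b | a b. a \<in> D \<and> b \<in> D \<and> a \<noteq> b}"
    unfolding min_dist_def using assms(2-4) by (intro Min_in finite_hamming_values) auto
  then obtain x y where "x \<in> D" "y \<in> D" "x \<noteq> y" "min_dist D = hamming x y"
    by blast
  then show ?thesis
    using assms(1) min_dist_le_hamming[of x C y] by auto
qed

lemma dist_code_le: "c \<in> C \<Longrightarrow> dist_code \<alpha> C \<le> hamming (\<alpha> :: 'm::finite set) c"
  unfolding dist_code_def by (intro Min_le) auto

lemma dist_code_attained:
  assumes "C \<noteq> {}"
  obtains c where "c \<in> C" "dist_code (\<alpha> :: 'm::finite set) C = hamming \<alpha> c"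
proof -
  have "dist_code \<alpha> C \<in> {hamming \<alpha> c | c. c \<in> C}"
    unfolding dist_code_def using assms by (intro Min_in) auto
  then show ?thesis
    using that by blast
qed

lemma dist_code_le_covering_radius: "dist_code (\<alpha> :: 'm::finite set) C \<le> covering_radius C"
proof -
  have "{dist_code \<alpha> C | \<alpha>. True} = range (\<lambda>\<alpha>. dist_code \<alpha> C)"
    by auto
  then show ?thesis
    unfolding covering_radius_def by (intro Max_ge) auto
qed

lemma dist_code_eq_0_iff:
  assumes "C \<noteq> {}"
  shows "dist_code (\<alpha> :: 'm::finite set) C = 0 \<longleftrightarrow> \<alpha> \<in> C"
proof
  assume "dist_code \<alpha> C = 0"
  moreover obtain c where "c \<in> C" "dist_code \<alpha> C = hamming \<alpha> c"
    using assms by (rule dist_code_attained)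
  ultimately show "\<alpha> \<in> C"
    by (simp add: hamming_eq_0_iff)
next
  assume "\<alpha> \<in> C"
  then show "dist_code \<alpha> C = 0"
    using dist_code_le[of \<alpha> C \<alpha>] hamming_eq_0_iff[of \<alpha> \<alpha>] by simp
qed

lemma code_layer_0: "(C :: 'm::finite set set) \<noteq> {} \<Longrightarrow> code_layer C 0 = C"
  by (simp add: code_layer_def dist_code_eq_0_iff)

lemma transitive_on_AutC:
  assumes "completely_transitive C" "(C :: 'm::finite set set) \<noteq> {}"
  shows "transitive_on (AutC C) C"
proof -
  have "transitive_on (AutC C) (code_layer C 0)"
    using assms(1) by (simp add: completely_transitive_def)
  then show ?thesis
    using code_layer_0[OF assms(2)] by simp
qed

lemma dist_code_eq_card:
  fixes C :: "'m::finite set set"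
  assumes zero: "{} \<in> C" and small: "2 * card x < min_dist C"
  shows "dist_code x C = card x"
proof -
  obtain c where c: "c \<in> C" "dist_code x C = hamming x c"
    using dist_code_attained[of C x] zero by blast
  have le: "dist_code x C \<le> card x"
    using dist_code_le[OF zero, of x] by simp
  have "c = {}"
  proof (rule ccontr)
    assume "c \<noteq> {}"
    then have "min_dist C \<le> hamming {} c"
      using min_dist_le_hamming[OF zero c(1)] by simp
    also have "\<dots> \<le> hamming {} x + hamming x c"
      by (rule hamming_triangle)
    finally show False
      using le c small by simp
  qed
  then show ?thesis
    using c by simp
qed

lemma stab0_AutC_transitive_on_weight:
  fixes C :: "'m::finite set set"
  assumes CT: "completely_transitive C" and zero: "{} \<in> C"
    and small: "2 * card e < min_dist C" and same_weight: "card e' = card e"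
  obtains g where "g \<in> stab0 (AutC C)" "g e = e'"
proof -
  have layer: "x \<in> code_layer C (card e)" if "card x = card e" for x
    using dist_code_eq_card[OF zero] small that by (simp add: code_layer_def)
  have "card e \<le> covering_radius C"
    using dist_code_le_covering_radius[of e C] dist_code_eq_card[OF zero small] by simp
  then obtain g where g: "g \<in> AutC C" "g e = e'"
    using CT layer[of e] layer[OF same_weight]
    unfolding completely_transitive_def transitive_on_def by blast
  have gH: "g \<in> HAut" "g {} \<in> C"
    using g(1) zero by (auto simp: AutC_def setwise_stab_def)
  have "hamming (g {}) {} \<le> hamming (g {}) e' + hamming e' {}"
    by (rule hamming_triangle)
  also have "\<dots> = 2 * card e"
    using hamming_HAut[OF gH(1), of "{}" e] g(2) same_weight by simp
  finally have "g {} = {}"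
    using min_dist_le_hamming[OF gH(2) zero] small by (cases "g {} = {}") auto
  with g show thesis
    using that by (simp add: stab0_def)
qed

lemma code_dim_singleton: "code_dim {a} = 0"
  unfolding code_dim_def by (rule the_equality) (simp_all add: eq_commute[of "Suc 0"])

section \<open>The maximal linear subcode\<close>

locale max_linear_subcode =
  fixes C Cmax :: "'m::finite set set"
  assumes zero_in_code: "{} \<in> C"
    and max_linear: "is_max_linear_subcode C Cmax"
begin

lemma linear: "linear_code Cmax"
  and subcode: "Cmax \<subseteq> C"
  and transl_group_subset_AutC: "transl_group Cmax \<subseteq> AutC C"
  using max_linear by (simp_all add: is_max_linear_subcode_def)

lemma zero_in_subcode: "{} \<in> Cmax"
  using linear by (simp add: linear_code_def)

lemma AutC_inter_Btrans: "AutC C \<inter> Btrans = transl_group Cmax"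
proof
  show "transl_group Cmax \<subseteq> AutC C \<inter> Btrans"
    using transl_group_subset_AutC by (auto simp: transl_group_def Btrans_def)
  define V where "V = {b. translation b \<in> AutC C}"
  have "linear_code V"
    unfolding linear_code_def V_def
    using aut_subgroupD(2,3)[OF aut_subgroup_AutC] by (auto simp flip: translation_comp)
  moreover have "V \<subseteq> C"
  proof
    fix b assume "b \<in> V"
    then have "translation b {} \<in> C"
      using zero_in_code by (auto simp: V_def AutC_def setwise_stab_def)
    then show "b \<in> C"
      by (simp add: translation_apply)
  qed
  moreover have "transl_group V \<subseteq> AutC C"
    by (auto simp: transl_group_def V_def)
  ultimately have "V \<subseteq> Cmax"
    using max_linear unfolding is_max_linear_subcode_def by blast
  then show "AutC C \<inter> Btrans \<subseteq> transl_group Cmax"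
    by (auto simp: Btrans_def transl_group_def V_def)
qed

lemma stab0_AutC_preserves_subcode:
  assumes "g \<in> stab0 (AutC C)"
  shows "g ` Cmax = Cmax"
proof -
  have g: "g \<in> AutC C" "g \<in> HAut" "g {} = {}"
    using assms by (auto simp: stab0_def AutC_def setwise_stab_def)
  have "g b \<in> Cmax" if b: "b \<in> Cmax" for b
  proof -
    have "translation b \<in> AutC C"
      using b transl_group_subset_AutC by (auto simp: transl_group_def)
    then have "g \<circ> translation b \<circ> inv g \<in> AutC C"
      using aut_subgroupD(3,4)[OF aut_subgroup_AutC] g(1) by blast
    then have "translation (perm_of g ` b) \<in> transl_group Cmax"
      using HAut_conj_translation[OF g(2)] AutC_inter_Btrans by (auto simp: Btrans_def)
    moreover have "g b = perm_of g ` b"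
      using HAut_apply[OF g(2), of b] g(3) by simp
    ultimately show ?thesis
      by (simp add: transl_group_def inj_image_mem_iff[OF inj_translation])
  qed
  moreover have "inj_on g Cmax"
    using inj_on_subset[OF bij_is_inj[OF HAut_inv(2)[OF g(2)]] subset_UNIV] .
  ultimately show ?thesis
    by (intro endo_inj_surj) auto
qed

lemma transl_group_subset_setwise_stab: "transl_group Cmax \<subseteq> setwise_stab (AutC C) Cmax"
  using transl_group_subset_AutC linear_code_translation_image[OF linear]
  by (auto simp: transl_group_def setwise_stab_def)

lemma stab0_AutC_subset_setwise_stab: "stab0 (AutC C) \<subseteq> setwise_stab (AutC C) Cmax"
proof
  fix g assume "g \<in> stab0 (AutC C)"
  then show "g \<in> setwise_stab (AutC C) Cmax"
    using stab0_AutC_preserves_subcode by (simp add: stab0_def setwise_stab_def)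
qed

lemma setwise_stab_inter_Btrans: "setwise_stab (AutC C) Cmax \<inter> Btrans = transl_group Cmax"
  using AutC_inter_Btrans transl_group_subset_setwise_stab by (auto simp: setwise_stab_def)

lemma aut_subgroup_setwise_stab_AutC: "aut_subgroup (setwise_stab (AutC C) Cmax)"
  by (rule aut_subgroup_setwise_stab[OF aut_subgroup_AutC])

lemma internal_semidirect_setwise_stab:
  "internal_semidirect (setwise_stab (AutC C) Cmax) (transl_group Cmax) (stab0 (AutC C))"
  unfolding internal_semidirect_def
proof (intro conjI)
  let ?Xmax = "setwise_stab (AutC C) Cmax"
  note Xmax = aut_subgroup_setwise_stab_AutC
  have T: "aut_subgroup (transl_group Cmax)"
    by (rule aut_subgroup_transl_group[OF linear])
  have X0: "aut_subgroup (stab0 (AutC C))"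
    by (rule aut_subgroup_stab0[OF aut_subgroup_AutC])
  show "subgroup ?Xmax HAutG"
    using Xmax by (rule subgroup_HAutG)
  show "normal (transl_group Cmax) (HAutG\<lparr>carrier := ?Xmax\<rparr>)"
  proof (rule normal_aut_subgroup[OF Xmax T transl_group_subset_setwise_stab])
    fix g n assume g: "g \<in> ?Xmax" and n: "n \<in> transl_group Cmax"
    then obtain b where "n = translation b"
      by (auto simp: transl_group_def)
    then have "g \<circ> n \<circ> inv g \<in> Btrans"
      using HAut_conj_translation g aut_subgroupD(1)[OF Xmax] by (auto simp: Btrans_def)
    moreover have "g \<circ> n \<circ> inv g \<in> ?Xmax"
      using aut_subgroupD(3,4)[OF Xmax] g n transl_group_subset_setwise_stab by blast
    ultimately show "g \<circ> n \<circ> inv g \<in> transl_group Cmax"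
      using setwise_stab_inter_Btrans by blast
  qed
  show "subgroup (stab0 (AutC C)) (HAutG\<lparr>carrier := ?Xmax\<rparr>)"
    using Xmax X0 stab0_AutC_subset_setwise_stab by (rule subgroup_aut_subgroup)
  show "transl_group Cmax \<inter> stab0 (AutC C) = {id}"
    using aut_subgroupD(2)[OF T] aut_subgroupD(2)[OF X0]
    by (auto simp: transl_group_def stab0_def translation_apply)
  show "?Xmax = {n \<circ> h | n h. n \<in> transl_group Cmax \<and> h \<in> stab0 (AutC C)}"
  proof (intro equalityI subsetI)
    fix g assume g: "g \<in> ?Xmax"
    define b where "b = g {}"
    have "b \<in> Cmax"
      using g zero_in_subcode by (auto simp: b_def setwise_stab_def)
    then have tb: "translation b \<in> transl_group Cmax"
      by (simp add: transl_group_def)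
    then have "translation b \<circ> g \<in> ?Xmax"
      using g aut_subgroupD(3)[OF Xmax] transl_group_subset_setwise_stab by blast
    moreover have "(translation b \<circ> g) {} = {}"
      by (simp add: b_def translation_apply)
    ultimately have "translation b \<circ> g \<in> stab0 (AutC C)"
      by (simp add: stab0_def setwise_stab_def)
    moreover have "g = translation b \<circ> (translation b \<circ> g)"
      by (simp flip: comp_assoc)
    ultimately show "g \<in> {n \<circ> h | n h. n \<in> transl_group Cmax \<and> h \<in> stab0 (AutC C)}"
      using tb by blast
  next
    fix g assume "g \<in> {n \<circ> h | n h. n \<in> transl_group Cmax \<and> h \<in> stab0 (AutC C)}"
    then show "g \<in> ?Xmax"
      using aut_subgroupD(3)[OF Xmax] transl_group_subset_setwise_stab
        stab0_AutC_subset_setwise_stab by blast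
  qed
qed

lemma F2_module_stab0_AutC: "F2_module Cmax (stab0 (AutC C))"
  unfolding F2_module_def
proof (intro conjI ballI linear)
  fix g assume g: "g \<in> stab0 (AutC C)"
  then show "g ` Cmax = Cmax"
    by (rule stab0_AutC_preserves_subcode)
  fix a b
  show "g (symdiff a b) = symdiff (g a) (g b)"
    using g by (intro HAut_linear) (auto simp: stab0_def AutC_def setwise_stab_def)
qed

lemma transitive_on_setwise_stab: "transitive_on (setwise_stab (AutC C) Cmax) Cmax"
  unfolding transitive_on_def
proof (intro ballI)
  fix a b assume "a \<in> Cmax" "b \<in> Cmax"
  then have "translation (symdiff a b) \<in> setwise_stab (AutC C) Cmax"
    using linear transl_group_subset_setwise_stab by (auto simp: linear_code_def transl_group_def)
  moreover have "translation (symdiff a b) a = b"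
    by (simp add: translation_apply flip: symdiff_assoc)
  ultimately show "\<exists>g\<in>setwise_stab (AutC C) Cmax. g a = b"
    by blast
qed

lemma neighbour_transitive_setwise_stab:
  assumes CT: "completely_transitive C" and small: "2 * s < min_dist C"
  shows "neighbour_transitive (setwise_stab (AutC C) Cmax) Cmax s"
  unfolding neighbour_transitive_def
proof (intro conjI ballI)
  let ?Xmax = "setwise_stab (AutC C) Cmax"
  note Xmax = aut_subgroup_setwise_stab_AutC
  have transl: "translation c \<in> ?Xmax" if "c \<in> Cmax" for c
    using that transl_group_subset_setwise_stab by (auto simp: transl_group_def)
  show "subgroup ?Xmax HAutG"
    using Xmax by (rule subgroup_HAutG)
  show "?Xmax \<subseteq> AutC Cmax"
    using aut_subgroupD(1)[OF Xmax] by (auto simp: AutC_def setwise_stab_def)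
  show "transitive_on ?Xmax Cmax"
    by (rule transitive_on_setwise_stab)
  fix i assume i: "i \<in> {1..s}"
  show "transitive_on ?Xmax (code_layer Cmax i)"
    unfolding transitive_on_def
  proof (intro ballI)
    fix a b assume a: "a \<in> code_layer Cmax i" and b: "b \<in> code_layer Cmax i"
    obtain c where c: "c \<in> Cmax" "dist_code a Cmax = hamming a c"
      using dist_code_attained[of Cmax a] zero_in_subcode by blast
    obtain c' where c': "c' \<in> Cmax" "dist_code b Cmax = hamming b c'"
      using dist_code_attained[of Cmax b] zero_in_subcode by blast
    have weights: "card (symdiff a c) = i" "card (symdiff b c') = i"
      using a b c c' by (auto simp: code_layer_def hamming_def)
    then have "2 * card (symdiff a c) < min_dist C" "card (symdiff b c') = card (symdiff a c)"
      using i small by auto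
    then obtain g where g: "g \<in> stab0 (AutC C)" "g (symdiff a c) = symdiff b c'"
      using stab0_AutC_transitive_on_weight[OF CT zero_in_code] by blast
    have "translation c' \<circ> g \<circ> translation c \<in> ?Xmax"
      using aut_subgroupD(3)[OF Xmax] transl[OF c(1)] transl[OF c'(1)] g(1)
        stab0_AutC_subset_setwise_stab by blast
    moreover have "(translation c' \<circ> g \<circ> translation c) a = b"
      using g(2) by (simp add: translation_apply symdiff_assoc)
    ultimately show "\<exists>g\<in>?Xmax. g a = b"
      by blast
  qed
qed

lemma card_ratios:
  assumes "transitive_on (AutC C) C"
  shows "real (card C) / real (card Cmax)
           = real (card (AutC C)) / real (card (setwise_stab (AutC C) Cmax))"
    and "real (card (AutC C)) / real (card (setwise_stab (AutC C) Cmax))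
           = real (card (induced_perm (AutC C))) / real (card (induced_perm (stab0 (AutC C))))"
proof -
  let ?X = "AutC C"
  let ?Xmax = "setwise_stab (AutC C) Cmax"
  let ?X\<^sub>0 = "stab0 (AutC C)"
  have "(\<lambda>g. g {}) ` ?X = C"
    using assms zero_in_code by (rule orbit_of_zero) (simp add: AutC_def setwise_stab_def)
  then have X: "card ?X = card C * card ?X\<^sub>0"
    using card_orbit_stabiliser[OF aut_subgroup_AutC[of C]] by simp
  have "(\<lambda>g. g {}) ` ?Xmax = Cmax"
    using transitive_on_setwise_stab zero_in_subcode by (rule orbit_of_zero) (simp add: setwise_stab_def)
  moreover have "stab0 ?Xmax = ?X\<^sub>0"
    using stab0_AutC_subset_setwise_stab by (auto simp: stab0_def setwise_stab_def)
  ultimately have Xmax: "card ?Xmax = card Cmax * card ?X\<^sub>0"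
    using card_orbit_stabiliser[OF aut_subgroup_setwise_stab_AutC] by simp
  have "card (transl_group Cmax) = card Cmax"
    unfolding transl_group_def using inj_on_subset[OF inj_translation subset_UNIV] by (rule card_image)
  then have X_perm: "card ?X = card (induced_perm ?X) * card Cmax"
    using card_induced_perm_kernel[OF aut_subgroup_AutC[of C]] AutC_inter_Btrans by simp
  have stab0_perm: "card (induced_perm ?X\<^sub>0) = card ?X\<^sub>0"
    using aut_subgroupD(1)[OF aut_subgroup_AutC[of C]] by (rule card_induced_perm_stab0)
  have "id \<in> ?X\<^sub>0"
    by (rule aut_subgroupD(2)[OF aut_subgroup_stab0[OF aut_subgroup_AutC[of C]]])
  then have stab0_pos: "real (card ?X\<^sub>0) \<noteq> 0"
    by (auto simp: card_eq_0_iff)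
  have Cmax_pos: "real (card Cmax) \<noteq> 0"
    using zero_in_subcode by (auto simp: card_eq_0_iff)
  show "real (card C) / real (card Cmax) = real (card ?X) / real (card ?Xmax)"
    using stab0_pos by (simp add: X Xmax)
  show "real (card ?X) / real (card ?Xmax)
          = real (card (induced_perm ?X)) / real (card (induced_perm ?X\<^sub>0))"
    using Cmax_pos by (simp add: X_perm Xmax stab0_perm mult.commute)
qed

end

theorem proposition2p7:
  fixes C Cmax :: "('m::finite) set set"
    and X Xmax :: "('m set \<Rightarrow> 'm set) set"
  assumes CT: "completely_transitive C"
    and zero: "{} \<in> C"
    and mindist: "min_dist C \<ge> 5"
    and X_def: "X = AutC C"
    and Cmax: "is_max_linear_subcode C Cmax"
    and Xmax_def: "Xmax = setwise_stab X Cmax"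
    and dim_lo: "2 \<le> code_dim Cmax"
    and dim_hi: "code_dim Cmax \<le> card (UNIV :: 'm set) - 2"
  shows "internal_semidirect Xmax (transl_group Cmax) (stab0 X)
    \<and> (neighbour_transitive Xmax Cmax 2 \<and> min_dist Cmax \<ge> 5)
    \<and> (kernel_on_coords X = kernel_on_coords Xmax \<and> kernel_on_coords X = X \<inter> Btrans
       \<and> X \<inter> Btrans = Xmax \<inter> Btrans \<and> Xmax \<inter> Btrans = transl_group Cmax)
    \<and> F2_module Cmax (stab0 X)
    \<and> (real (card C) / real (card Cmax) = real (card X) / real (card Xmax)
       \<and> real (card X) / real (card Xmax)
           = real (card (induced_perm X)) / real (card (induced_perm (stab0 X))))"
proof -
  interpret max_linear_subcode C Cmax
    using zero Cmax by unfold_locales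
  \<comment> \<open>Only \<open>dim Cmax \<ge> 1\<close> is needed: it gives \<open>Cmax\<close> two codewords, without which
    \<open>min_dist Cmax\<close> is the minimum of the empty set.\<close>
  have "Cmax \<noteq> {{}}"
    using dim_lo by (auto simp: code_dim_singleton)
  then obtain b where "b \<in> Cmax" "b \<noteq> {}"
    using zero_in_subcode by blast
  then have "min_dist C \<le> min_dist Cmax"
    using min_dist_subcode[OF subcode _ zero_in_subcode] by blast
  moreover have "2 * 2 < min_dist C"
    using mindist by simp
  moreover have "transitive_on (AutC C) C"
    using transitive_on_AutC[OF CT] zero by blast
  moreover have "kernel_on_coords X = X \<inter> Btrans" "kernel_on_coords Xmax = Xmax \<inter> Btrans"
    unfolding Xmax_def X_def
    using aut_subgroupD(1)[OF aut_subgroup_AutC[of C]]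
      aut_subgroupD(1)[OF aut_subgroup_setwise_stab_AutC]
    by (simp_all add: kernel_on_coords_eq)
  ultimately show ?thesis
    unfolding Xmax_def X_def
    using internal_semidirect_setwise_stab neighbour_transitive_setwise_stab[OF CT] mindist
      AutC_inter_Btrans setwise_stab_inter_Btrans F2_module_stab0_AutC
      card_ratios
    by simp
qed

end
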